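(* Let $k$ be a positive integer, let $n_1,\ldots,n_k,d_1,\ldots,d_k$ be positive integers, and let $r_1,\ldots,r_k$ be integers with $0\le r_i\le d_i$ for all $i$ and $0<\sum_i r_i<\sum_i d_i$. Suppose one of the following holds: (1) $k=1$, $n_1,d_1\ge 2$, and $(n_1,d_1)\neq(2,2)$; (2) $k=2$, and if $n_1=n_2=1$ then $d_1,d_2\ge 2$; (3) $k\ge 3$. Then $$\prod_{i=1}^k\binom{n_i+r_i}{n_i}+\prod_{i=1}^k\binom{n_i+d_i-r_i}{n_i}<\prod_{i=1}^k\binom{n_i+d_i}{n_i}.$$ *)

theory Defs
  imports Main
begin

end

theory Submission
  imports Defs
begin

text \<open>Write \<open>f\<^sub>n(m) = C(n + m, n)\<close>. Pascal's rule gives the superadditivity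
  \<open>f\<^sub>n(s) + f\<^sub>n(t) + s t C(n, 2) \<le> f\<^sub>n(s + t) + 1\<close>, which settles the case of one factor.
  For several factors put \<open>a\<^sub>i = f(r\<^sub>i)\<close>, \<open>b\<^sub>i = f(d\<^sub>i - r\<^sub>i)\<close>, \<open>c\<^sub>i = f(d\<^sub>i)\<close>, so that
  \<open>a\<^sub>i + b\<^sub>i \<le> c\<^sub>i + 1\<close>. From \<open>(a + b - 1)(p + q - 1) \<le> c r\<close> one gets, for every splitting of
  the index set into \<open>J\<close> and \<open>K\<close>,
  \<open>A + B + (A\<^sub>J - 1)(B\<^sub>K - 1) + (B\<^sub>J - 1)(A\<^sub>K - 1) \<le> C + 1\<close>
  for the products \<open>A, B, C\<close> and their partial products over \<open>J\<close> and \<open>K\<close>. It remains to choose a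
  splitting whose cross terms are at least 2: \<open>K\<close> the indices with \<open>r\<^sub>i = 0\<close> (or symmetrically
  \<open>r\<^sub>i = d\<^sub>i\<close>) if there are any, otherwise \<open>J\<close> a single index. The cross term can only equal 1
  when \<open>k = 2\<close>, \<open>n\<^sub>1 = n\<^sub>2 = 1\<close> and some \<open>d\<^sub>i = 1\<close>, which is the excluded case.\<close>

lemma binomial_add_Suc:
  assumes "1 \<le> n"
  shows "n + Suc m choose n = (n + m choose n) + (n + m choose (n - 1))"
  using assms by (cases n) simp_all

lemma add_le_binomial:
  assumes "1 \<le> n" "1 \<le> m"
  shows "n + m \<le> n + m choose n"
  using assms(2)
proof (induction m rule: dec_induct)
  case (step m)
  have "0 < n + m choose (n - 1)" by simp
  then show ?case using step.IH binomial_add_Suc[OF assms(1), of m] by linarith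
qed simp

lemma two_le_binomial:
  assumes "1 \<le> n" "1 \<le> m"
  shows "2 \<le> n + m choose n"
  using add_le_binomial[OF assms] assms by linarith

lemma binomial_eq_2_iff:
  assumes "1 \<le> n" "1 \<le> m"
  shows "n + m choose n = 2 \<longleftrightarrow> n = 1 \<and> m = 1"
  using add_le_binomial[OF assms] assms by auto

lemma binomial_pred_growth:
  "(n + s choose (n - 1)) + t * (n choose 2) \<le> n + (s + t) choose (n - 1)"
proof (cases "n < 2")
  case True
  then show ?thesis by (simp add: binomial_right_mono)
next
  case False
  then show ?thesis
  proof (induction t)
    case (Suc t)
    have "n choose 2 = n choose (n - 2)"
      using False by (intro binomial_symmetric) simp
    also have "\<dots> \<le> n + (s + t) choose (n - 2)"
      by (rule binomial_right_mono) simp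
    finally have "n choose 2 \<le> n + (s + t) choose (n - 2)" .
    moreover have "n + (s + Suc t) choose (n - 1)
        = (n + (s + Suc t) - 1 choose (n - 1 - 1)) + (n + (s + Suc t) - 1 choose (n - 1))"
      using False by (intro choose_reduce_nat) auto
    ultimately show ?case
      using Suc.IH False by (simp add: numeral_2_eq_2)
  qed simp
qed

lemma binomial_superadditive:
  "(n + s choose n) + (n + t choose n) + s * t * (n choose 2) \<le> (n + (s + t) choose n) + 1"
proof (induction s)
  case (Suc s)
  show ?case
  proof (cases "n = 0")
    case False
    then have n: "1 \<le> n" by simp
    have "(n + Suc s choose n) + (n + t choose n) + Suc s * t * (n choose 2)
        = ((n + s choose n) + (n + t choose n) + s * t * (n choose 2))
          + ((n + s choose (n - 1)) + t * (n choose 2))"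
      using binomial_add_Suc[OF n, of s] by (simp add: algebra_simps)
    also have "\<dots> \<le> ((n + (s + t) choose n) + 1) + (n + (s + t) choose (n - 1))"
      using Suc.IH binomial_pred_growth by (rule add_mono)
    also have "\<dots> = (n + (Suc s + t) choose n) + 1"
      using binomial_add_Suc[OF n, of "s + t"] by simp
    finally show ?thesis .
  qed simp
qed simp

lemma binomial_add_binomial_less:
  assumes "2 \<le> n" "1 \<le> s" "1 \<le> t" "(n, s + t) \<noteq> (2, 2)"
  shows "(n + s choose n) + (n + t choose n) < n + (s + t) choose n"
proof -
  have "2 \<le> s * t * (n choose 2)"
  proof (cases "n = 2")
    case True
    then have "2 \<le> s * t" using assms mult_le_mono[of 2 s 1 t] by (cases "s = 1") auto
    then show ?thesis using True by simp
  next
    case False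
    then have "3 \<le> n" using assms by simp
    have "2 + (n - 2) \<le> 2 + (n - 2) choose 2"
      using \<open>3 \<le> n\<close> by (intro add_le_binomial) auto
    moreover have "2 + (n - 2) = n" using \<open>3 \<le> n\<close> by simp
    ultimately have "n \<le> n choose 2" by (simp only:)
    then show ?thesis using mult_le_mono[of 1 "s * t" 2 "n choose 2"] assms \<open>3 \<le> n\<close> by simp
  qed
  then show ?thesis using binomial_superadditive[of n s t] by linarith
qed

lemma mult_add_mult_cross_le:
  fixes a b c p q r :: nat
  assumes "1 \<le> a" "1 \<le> b" "a + b \<le> c + 1" "1 \<le> p" "1 \<le> q" "p + q \<le> r + 1"
  shows "a * p + b * q + (a - 1) * (q - 1) + (b - 1) * (p - 1) \<le> c * r + 1"
proof -
  have "a * p + b * q + (a - 1) * (q - 1) + (b - 1) * (p - 1) = (a + b - 1) * (p + q - 1) + 1"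
    using assms(1,2,4,5) by (cases a; cases b; cases p; cases q) (simp_all add: algebra_simps)
  also have "\<dots> \<le> c * r + 1"
    using assms by (intro add_mono mult_le_mono) auto
  finally show ?thesis .
qed

lemma prod_add_prod_le:
  fixes a b c :: "'i \<Rightarrow> nat"
  assumes "finite I" "\<forall>i\<in>I. 1 \<le> a i \<and> 1 \<le> b i \<and> a i + b i \<le> c i + 1"
  shows "prod a I + prod b I \<le> prod c I + 1"
  using assms
proof (induction I rule: finite_induct)
  case (insert i I)
  have "1 \<le> prod a I" "1 \<le> prod b I"
    using insert.prems by (intro prod_ge_1; simp)+
  then show ?case
    using insert mult_add_mult_cross_le[of "a i" "b i" "c i" "prod a I" "prod b I" "prod c I"] by simp
qed simp

lemma prod_add_prod_cross_le:
  fixes a b c :: "'i \<Rightarrow> nat"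
  assumes "finite I" "J \<subseteq> I" and factors: "\<forall>i\<in>I. 1 \<le> a i \<and> 1 \<le> b i \<and> a i + b i \<le> c i + 1"
  shows "prod a I + prod b I + (prod a J - 1) * (prod b (I - J) - 1) + (prod b J - 1) * (prod a (I - J) - 1)
    \<le> prod c I + 1"
proof -
  have fin: "finite J" "finite (I - J)" using assms finite_subset by auto
  have "prod a J + prod b J \<le> prod c J + 1" "prod a (I - J) + prod b (I - J) \<le> prod c (I - J) + 1"
    using fin factors \<open>J \<subseteq> I\<close> by (intro prod_add_prod_le; auto)+
  moreover have "1 \<le> prod a J" "1 \<le> prod b J" "1 \<le> prod a (I - J)" "1 \<le> prod b (I - J)"
    using factors \<open>J \<subseteq> I\<close> by (intro prod_ge_1; auto)+
  ultimately show ?thesis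
    using mult_add_mult_cross_le[of "prod a J" "prod b J" "prod c J" "prod a (I - J)" "prod b (I - J)" "prod c (I - J)"]
    by (simp add: prod.subset_diff[OF assms(2,1)] mult.commute)
qed

lemma power_card_le_prod:
  fixes f :: "'a \<Rightarrow> 'b::linordered_semidom"
  assumes "0 \<le> m" "\<forall>x\<in>A. m \<le> f x"
  shows "m ^ card A \<le> prod f A"
  using prod_mono[of A "\<lambda>_. m" f] assms by simp

lemma two_le_prod:
  fixes f :: "'a \<Rightarrow> nat"
  assumes "finite A" "A \<noteq> {}" "\<forall>x\<in>A. 2 \<le> f x"
  shows "2 \<le> prod f A"
proof -
  have "(2::nat) ^ 1 \<le> 2 ^ card A"
    using assms by (intro power_increasing) (auto simp: Suc_le_eq card_gt_0_iff)
  then show ?thesis using power_card_le_prod[of 2 A f] assms(3) by simp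
qed

lemma prod_eq_2_imp_singleton:
  fixes f :: "'a \<Rightarrow> nat"
  assumes "finite A" "\<forall>x\<in>A. 2 \<le> f x" "prod f A = 2"
  shows "\<exists>x. A = {x} \<and> f x = 2"
proof -
  have "2 ^ card A \<le> (2::nat) ^ 1"
    using power_card_le_prod[of 2 A f] assms by simp
  then have "card A \<le> 1" by (rule power_le_imp_le_exp[rotated]) simp
  moreover have "card A \<noteq> 0" using assms by auto
  ultimately obtain x where "A = {x}" by (auto simp: card_1_singleton_iff le_Suc_eq)
  then show ?thesis using assms(3) by simp
qed

lemma two_le_pred_mult_pred:
  fixes x y :: nat
  assumes "2 \<le> x" "2 \<le> y" "\<not> (x = 2 \<and> y = 2)"
  shows "2 \<le> (x - 1) * (y - 1)"
proof (cases "x = 2")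
  case True
  then have "1 * 2 \<le> (x - 1) * (y - 1)" using assms by (intro mult_le_mono) auto
  then show ?thesis by simp
next
  case False
  then have "2 * 1 \<le> (x - 1) * (y - 1)" using assms by (intro mult_le_mono) auto
  then show ?thesis by simp
qed

lemma binomial_factor_bounds:
  "1 \<le> n + s choose n \<and> 1 \<le> n + t choose n \<and> (n + s choose n) + (n + t choose n) \<le> (n + (s + t) choose n) + 1"
  using binomial_superadditive[of n s t] by (simp add: Suc_le_eq)

lemma prod_binomial_add_less_of_zero:
  fixes n u v :: "'i \<Rightarrow> nat"
  assumes "finite I"
    and pos: "\<forall>i\<in>I. 1 \<le> n i \<and> 1 \<le> u i + v i"
    and zero: "\<exists>i\<in>I. u i = 0" and nonzero: "\<exists>i\<in>I. u i \<noteq> 0"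
    and exceptional: "card I = 2 \<and> (\<forall>i\<in>I. n i = 1) \<longrightarrow> (\<forall>i\<in>I. 2 \<le> u i + v i)"
  shows "(\<Prod>i\<in>I. n i + u i choose n i) + (\<Prod>i\<in>I. n i + v i choose n i)
    < (\<Prod>i\<in>I. n i + (u i + v i) choose n i)"
proof -
  define a where "a = (\<lambda>i. n i + u i choose n i)"
  define b where "b = (\<lambda>i. n i + v i choose n i)"
  define c where "c = (\<lambda>i. n i + (u i + v i) choose n i)"
  define J where "J = {i \<in> I. u i \<noteq> 0}"
  have fin: "finite J" "finite (I - J)" and nonempty: "J \<noteq> {}" "I - J \<noteq> {}"
    using \<open>finite I\<close> zero nonzero by (auto simp: J_def)
  have a_J: "2 \<le> a i \<and> (a i = 2 \<longleftrightarrow> n i = 1 \<and> u i = 1)" if "i \<in> J" for i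
    using that pos two_le_binomial binomial_eq_2_iff by (simp add: J_def a_def)
  have c_K: "2 \<le> c i \<and> (c i = 2 \<longleftrightarrow> n i = 1 \<and> u i + v i = 1)" if "i \<in> I - J" for i
    using that pos two_le_binomial binomial_eq_2_iff by (simp add: c_def)
  have a_K: "prod a (I - J) = 1"
    by (intro prod.neutral) (simp add: J_def a_def)
  have b_K: "prod b (I - J) = prod c (I - J)"
    by (intro prod.cong) (simp_all add: J_def b_def c_def)
  have A: "2 \<le> prod a J" and C: "2 \<le> prod c (I - J)"
    using two_le_prod fin nonempty a_J c_K by blast+
  have not_both_2: "\<not> (prod a J = 2 \<and> prod c (I - J) = 2)"
  proof
    assume "prod a J = 2 \<and> prod c (I - J) = 2"
    then obtain i j where "J = {j}" "a j = 2" "I - J = {i}" "c i = 2"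
      using prod_eq_2_imp_singleton fin a_J c_K by (metis (no_types, lifting))
    moreover from this have "I = {i, j}" "i \<noteq> j" by (auto simp: J_def)
    ultimately show False using exceptional a_J c_K by auto
  qed
  have "2 \<le> (prod a J - 1) * (prod c (I - J) - 1)"
    using A C not_both_2 by (rule two_le_pred_mult_pred)
  moreover have "\<forall>i\<in>I. 1 \<le> a i \<and> 1 \<le> b i \<and> a i + b i \<le> c i + 1"
    using binomial_factor_bounds by (simp add: a_def b_def c_def)
  then have "prod a I + prod b I + (prod a J - 1) * (prod c (I - J) - 1) \<le> prod c I + 1"
    using prod_add_prod_cross_le[of I J a b c] \<open>finite I\<close> a_K b_K by (simp add: J_def)
  ultimately have "prod a I + prod b I < prod c I" by linarith
  then show ?thesis by (simp add: a_def b_def c_def)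
qed

lemma prod_binomial_add_less_of_pos:
  fixes n u v :: "'i \<Rightarrow> nat"
  assumes "finite I" "2 \<le> card I" and pos: "\<forall>i\<in>I. 1 \<le> n i \<and> 1 \<le> u i \<and> 1 \<le> v i"
  shows "(\<Prod>i\<in>I. n i + u i choose n i) + (\<Prod>i\<in>I. n i + v i choose n i)
    < (\<Prod>i\<in>I. n i + (u i + v i) choose n i)"
proof -
  define a where "a = (\<lambda>i. n i + u i choose n i)"
  define b where "b = (\<lambda>i. n i + v i choose n i)"
  define c where "c = (\<lambda>i. n i + (u i + v i) choose n i)"
  obtain i where "i \<in> I" using assms(2) by fastforce
  have "I - {i} \<noteq> {}" using assms(2) \<open>i \<in> I\<close> by (auto simp: subset_singleton_iff)
  have "\<forall>i\<in>I. 1 \<le> a i \<and> 1 \<le> b i \<and> a i + b i \<le> c i + 1"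
    using binomial_factor_bounds by (simp add: a_def b_def c_def)
  then have "prod a I + prod b I + (a i - 1) * (prod b (I - {i}) - 1) + (b i - 1) * (prod a (I - {i}) - 1)
      \<le> prod c I + 1"
    using prod_add_prod_cross_le[of I "{i}" a b c] \<open>finite I\<close> \<open>i \<in> I\<close> by simp
  moreover have two_le: "\<forall>j\<in>I. 2 \<le> a j \<and> 2 \<le> b j"
    using pos two_le_binomial by (simp add: a_def b_def)
  then have "1 \<le> (a i - 1) * (prod b (I - {i}) - 1)" "1 \<le> (b i - 1) * (prod a (I - {i}) - 1)"
    using two_le_prod[of "I - {i}" a] two_le_prod[of "I - {i}" b] \<open>finite I\<close>
      \<open>I - {i} \<noteq> {}\<close> \<open>i \<in> I\<close> by (auto simp: Suc_le_eq)
  ultimately have "prod a I + prod b I < prod c I" by linarith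
  then show ?thesis by (simp add: a_def b_def c_def)
qed

lemma prod_binomial_add_less:
  fixes n u v :: "'i \<Rightarrow> nat"
  assumes "finite I" "2 \<le> card I" "\<forall>i\<in>I. 1 \<le> n i \<and> 1 \<le> u i + v i"
    and "\<exists>i\<in>I. u i \<noteq> 0" "\<exists>i\<in>I. v i \<noteq> 0"
    and "card I = 2 \<and> (\<forall>i\<in>I. n i = 1) \<longrightarrow> (\<forall>i\<in>I. 2 \<le> u i + v i)"
  shows "(\<Prod>i\<in>I. n i + u i choose n i) + (\<Prod>i\<in>I. n i + v i choose n i)
    < (\<Prod>i\<in>I. n i + (u i + v i) choose n i)"
proof -
  consider "\<exists>i\<in>I. u i = 0" | "\<exists>i\<in>I. v i = 0" | "\<forall>i\<in>I. 1 \<le> u i \<and> 1 \<le> v i"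
    by force
  then show ?thesis
  proof cases
    case 1
    then show ?thesis using assms prod_binomial_add_less_of_zero[of I n u v] by simp
  next
    case 2
    then show ?thesis using assms prod_binomial_add_less_of_zero[of I n v u] by (simp add: add.commute)
  next
    case 3
    then show ?thesis using assms prod_binomial_add_less_of_pos[of I n u v] by simp
  qed
qed

theorem lemma2p2:
  fixes k :: nat and n d r :: "nat \<Rightarrow> nat"
  assumes "k \<ge> 1"
    and "\<forall>i\<in>{1..k}. n i \<ge> 1 \<and> d i \<ge> 1 \<and> r i \<le> d i"
    and "0 < (\<Sum>i=1..k. r i)" and "(\<Sum>i=1..k. r i) < (\<Sum>i=1..k. d i)"
    and "(k = 1 \<and> n 1 \<ge> 2 \<and> d 1 \<ge> 2 \<and> (n 1, d 1) \<noteq> (2, 2))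
       \<or> (k = 2 \<and> (n 1 = 1 \<and> n 2 = 1 \<longrightarrow> d 1 \<ge> 2 \<and> d 2 \<ge> 2))
       \<or> k \<ge> 3"
  shows "(\<Prod>i=1..k. (n i + r i) choose (n i)) + (\<Prod>i=1..k. (n i + d i - r i) choose (n i))
         < (\<Prod>i=1..k. (n i + d i) choose (n i))"
proof -
  have "(\<Prod>i=1..k. (n i + d i - r i) choose n i) = (\<Prod>i=1..k. n i + (d i - r i) choose n i)"
    "(\<Prod>i=1..k. (n i + d i) choose n i) = (\<Prod>i=1..k. n i + (r i + (d i - r i)) choose n i)"
    using assms(2) by (auto intro!: prod.cong)
  moreover have "(\<Prod>i=1..k. n i + r i choose n i) + (\<Prod>i=1..k. n i + (d i - r i) choose n i)
      < (\<Prod>i=1..k. n i + (r i + (d i - r i)) choose n i)"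
  proof (cases "k = 1")
    case True
    then show ?thesis
      using assms(3-5) binomial_add_binomial_less[of "n 1" "r 1" "d 1 - r 1"] by simp
  next
    case False
    have "(\<Sum>i=1..k. d i - r i) = (\<Sum>i=1..k. d i) - (\<Sum>i=1..k. r i)"
      using assms(2) by (intro sum_subtractf_nat) auto
    then have "0 < (\<Sum>i=1..k. d i - r i)" using assms(4) by simp
    then have "\<exists>i\<in>{1..k}. d i - r i \<noteq> 0" by (rule contrapos_pp) simp
    moreover have "\<exists>i\<in>{1..k}. r i \<noteq> 0" using assms(3) by (rule contrapos_pp) simp
    moreover have "{1..k} = {1, 2}" if "k = 2" using that by auto
    ultimately show ?thesis
      using prod_binomial_add_less[of "{1..k}" n r "\<lambda>i. d i - r i"] assms False by auto
  qed
  ultimately show ?thesis by simp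
qed

end
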